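(* For every positive integer $k$ there exists $n_0$ such that for all $n\ge n_0$, $$\mathrm{exa}_k(n,K_3)=\left\lfloor \frac{(n-1)^2}{4}\right\rfloor+k+1.$$
   Context: For a graph $H$ and a graph $F$, $\mathcal N(H,F)$ denotes the number of subgraphs of $H$ isomorphic to $F$. For a nonnegative integer $k$, $\mathrm{exa}_k(n,F)$ is the largest number of edges of a simple graph $H$ on $n$ vertices with $\mathcal N(H,F)=k$. $K_3$ is the triangle. *)

theory Defs
  imports Complex_Main
begin

definition simple_graph :: "'a set \<Rightarrow> 'a set set \<Rightarrow> bool" where
  "simple_graph V E \<longleftrightarrow> finite V \<and> (\<forall>e\<in>E. e \<subseteq> V \<and> card e = 2)"

definition graph_iso :: "'a set \<Rightarrow> 'a set set \<Rightarrow> 'b set \<Rightarrow> 'b set set \<Rightarrow> bool" where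
  "graph_iso V1 E1 V2 E2 \<longleftrightarrow>
     (\<exists>f. bij_betw f V1 V2 \<and> (\<forall>u\<in>V1. \<forall>v\<in>V1. {u, v} \<in> E1 \<longleftrightarrow> {f u, f v} \<in> E2))"

definition count_copies :: "'a set \<Rightarrow> 'a set set \<Rightarrow> 'b set \<Rightarrow> 'b set set \<Rightarrow> nat" where
  "count_copies V E VF EF =
     card {(V', E'). V' \<subseteq> V \<and> E' \<subseteq> E \<and> (\<forall>e\<in>E'. e \<subseteq> V') \<and> graph_iso V' E' VF EF}"

definition exa_candidates :: "nat \<Rightarrow> nat \<Rightarrow> 'b set \<Rightarrow> 'b set set \<Rightarrow> nat set" where
  "exa_candidates k n VF EF =
     {card E | E. simple_graph {..<n} E \<and> count_copies {..<n} E VF EF = k}"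

definition exa :: "nat \<Rightarrow> nat \<Rightarrow> 'b set \<Rightarrow> 'b set set \<Rightarrow> nat" where
  "exa k n VF EF = Max (exa_candidates k n VF EF)"

definition K3_V :: "nat set" where "K3_V = {0, 1, 2}"
definition K3_E :: "nat set set" where "K3_E = {{0, 1}, {0, 2}, {1, 2}}"

end

theory Submission
  imports Defs
begin

(* The copies of K3 in a simple graph are exactly its triangles, so exa_k(n, K3) is the largest
   number of edges of a graph on n vertices with exactly k triangles.

   Upper bound: a graph with t >= 1 triangles has at most floor((n-1)^2/4) + t + 1 edges.  If
   t >= 2, some edge of one triangle is not an edge of another; deleting it loses one edge and at
   least one triangle, so induction on the number of edges reduces to t = 1.  If T is the only
   triangle, no vertex outside T has two neighbours in T, so at most 3 + (n - 3) edges meet T,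
   and Mantel's theorem bounds the remaining edges by floor((n-3)^2/4).  Mantel's theorem is
   proved the same way, deleting both ends of an edge.

   Lower bound: a complete bipartite graph with parts of sizes floor((n-1)/2) and ceil((n-1)/2),
   plus a vertex joined to one vertex of the first part and to k vertices of the second, has
   exactly k triangles, all through the new vertex. *)

definition two_subsets :: "'a set \<Rightarrow> 'a set set" where
  "two_subsets V = {e. e \<subseteq> V \<and> card e = 2}"

lemma doubleton_mem_two_subsets_iff [simp]:
  "{u, v} \<in> two_subsets V \<longleftrightarrow> u \<in> V \<and> v \<in> V \<and> u \<noteq> v"
  by (cases "u = v") (auto simp: two_subsets_def)

lemma two_subsetsE:
  assumes "e \<in> two_subsets V"
  obtains u v where "e = {u, v}" "u \<in> V" "v \<in> V" "u \<noteq> v"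
  using assms by (auto simp: two_subsets_def card_2_iff)

lemma finite_two_subsets: "finite V \<Longrightarrow> finite (two_subsets V)"
  by (rule finite_subset[of _ "Pow V"]) (auto simp: two_subsets_def)

lemma card_two_subsets: "finite V \<Longrightarrow> card (two_subsets V) = card V choose 2"
  unfolding two_subsets_def by (rule n_subsets)

lemma two_subsets_doubleton: "u \<noteq> v \<Longrightarrow> two_subsets {u, v} = {{u, v}}"
  by (auto elim!: two_subsetsE)

lemma two_subsets_insert3:
  assumes "a \<noteq> b" "a \<noteq> c" "b \<noteq> c"
  shows "two_subsets {a, b, c} = {{a, b}, {a, c}, {b, c}}"
  using assms by (auto elim!: two_subsetsE)

lemma simple_graph_iff_two_subsets: "simple_graph V E \<longleftrightarrow> finite V \<and> E \<subseteq> two_subsets V"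
  by (auto simp: simple_graph_def two_subsets_def)

lemma simple_graph_finite_edges: "simple_graph V E \<Longrightarrow> finite E"
  by (auto simp: simple_graph_iff_two_subsets intro: finite_subset finite_two_subsets)

lemma simple_graph_edgeD: "simple_graph V E \<Longrightarrow> {u, v} \<in> E \<Longrightarrow> u \<in> V \<and> v \<in> V \<and> u \<noteq> v"
  unfolding simple_graph_iff_two_subsets by (metis doubleton_mem_two_subsets_iff subsetD)

definition triangles :: "'a set set \<Rightarrow> 'a set set" where
  "triangles E = {T. card T = 3 \<and> two_subsets T \<subseteq> E}"

lemma insert3_mem_triangles_iff:
  "{a, b, c} \<in> triangles E \<longleftrightarrow>
     a \<noteq> b \<and> a \<noteq> c \<and> b \<noteq> c \<and> {a, b} \<in> E \<and> {a, c} \<in> E \<and> {b, c} \<in> E"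
  by (cases "a \<noteq> b \<and> a \<noteq> c \<and> b \<noteq> c") (auto simp: triangles_def two_subsets_insert3 card_insert_if)

lemma trianglesE:
  assumes "T \<in> triangles E"
  obtains a b c where "T = {a, b, c}" "a \<noteq> b" "a \<noteq> c" "b \<noteq> c" "{a, b} \<in> E" "{a, c} \<in> E" "{b, c} \<in> E"
proof -
  obtain a b c where "T = {a, b, c}" using assms by (auto simp: triangles_def card_3_iff)
  with assms that show thesis by (simp add: insert3_mem_triangles_iff)
qed

lemma triangle_through_vertex:
  assumes "T \<in> triangles E" "v \<in> T"
  obtains p q where "T = {v, p, q}" "v \<noteq> p" "v \<noteq> q" "p \<noteq> q" "{v, p} \<in> E" "{v, q} \<in> E" "{p, q} \<in> E"
  using assms(1)
proof (rule trianglesE)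
  fix a b c assume "T = {a, b, c}" "a \<noteq> b" "a \<noteq> c" "b \<noteq> c" "{a, b} \<in> E" "{a, c} \<in> E" "{b, c} \<in> E"
  moreover have "v = a \<or> v = b \<or> v = c" using assms(2) calculation(1) by simp
  ultimately show thesis
    using that[of b c] that[of a c] that[of a b] by (auto simp: insert_commute)
qed

lemma triangle_subset_vertices: "simple_graph V E \<Longrightarrow> T \<in> triangles E \<Longrightarrow> T \<subseteq> V"
  by (auto elim!: trianglesE dest: simple_graph_edgeD)

lemma finite_triangles:
  assumes "simple_graph V E"
  shows "finite (triangles E)"
proof (rule finite_subset)
  show "triangles E \<subseteq> Pow V" using triangle_subset_vertices[OF assms] by blast
  show "finite (Pow V)" using assms by (simp add: simple_graph_def)
qed

lemma triangles_Diff_edge: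
  "card f = 2 \<Longrightarrow> triangles (E - {f}) = {T \<in> triangles E. \<not> f \<subseteq> T}"
  by (auto simp: triangles_def two_subsets_def)

lemma graph_iso_complete_iff:
  assumes "finite V" "finite W" "E \<subseteq> two_subsets V"
  shows "graph_iso V E W (two_subsets W) \<longleftrightarrow> card V = card W \<and> E = two_subsets V"
proof
  assume "graph_iso V E W (two_subsets W)"
  then obtain f where f: "bij_betw f V W"
    and edges: "\<forall>u\<in>V. \<forall>v\<in>V. {u, v} \<in> E \<longleftrightarrow> {f u, f v} \<in> two_subsets W"
    unfolding graph_iso_def by blast
  have "two_subsets V \<subseteq> E"
  proof
    fix e assume "e \<in> two_subsets V"
    then obtain u v where "e = {u, v}" "u \<in> V" "v \<in> V" "u \<noteq> v" by (rule two_subsetsE)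
    moreover have "f u \<in> W" "f v \<in> W" "f u \<noteq> f v"
      using f calculation by (auto simp: bij_betw_def inj_on_eq_iff)
    ultimately show "e \<in> E" using edges by simp
  qed
  then show "card V = card W \<and> E = two_subsets V"
    using assms(3) bij_betw_same_card[OF f] by blast
next
  assume "card V = card W \<and> E = two_subsets V"
  moreover obtain f where f: "bij_betw f V W"
    using finite_same_card_bij assms(1,2) calculation by blast
  ultimately show "graph_iso V E W (two_subsets W)"
    unfolding graph_iso_def
    by (intro exI[of _ f]) (auto simp: bij_betw_def inj_on_eq_iff)
qed

lemma count_copies_complete:
  assumes "simple_graph V E" "finite W"
  shows "count_copies V E W (two_subsets W) =
           card {K. K \<subseteq> V \<and> card K = card W \<and> two_subsets K \<subseteq> E}"
proof -
  let ?copies = "{(V', E'). V' \<subseteq> V \<and> E' \<subseteq> E \<and> (\<forall>e\<in>E'. e \<subseteq> V') \<and>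
                            graph_iso V' E' W (two_subsets W)}"
  let ?cliques = "{K. K \<subseteq> V \<and> card K = card W \<and> two_subsets K \<subseteq> E}"
  have finV: "finite V" and EV: "E \<subseteq> two_subsets V"
    using assms(1) by (auto simp: simple_graph_iff_two_subsets)
  have "?copies = (\<lambda>K. (K, two_subsets K)) ` ?cliques"
  proof (intro equalityI subsetI)
    fix p assume "p \<in> ?copies"
    then obtain V' E' where p: "p = (V', E')" and sub: "V' \<subseteq> V" "E' \<subseteq> E"
      and inside: "\<forall>e\<in>E'. e \<subseteq> V'" and iso: "graph_iso V' E' W (two_subsets W)"
      by blast
    have "finite V'" using sub(1) finV by (rule finite_subset)
    moreover have "E' \<subseteq> two_subsets V'"
      using sub inside EV by (auto simp: two_subsets_def)
    ultimately have "card V' = card W" "E' = two_subsets V'"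
      using graph_iso_complete_iff assms(2) iso by blast+
    with sub p show "p \<in> (\<lambda>K. (K, two_subsets K)) ` ?cliques"
      by blast
  next
    fix p assume "p \<in> (\<lambda>K. (K, two_subsets K)) ` ?cliques"
    then obtain K where p: "p = (K, two_subsets K)" and K: "K \<in> ?cliques" by blast
    moreover have "finite K" using K finV by (auto intro: finite_subset)
    ultimately have "graph_iso K (two_subsets K) W (two_subsets W)"
      using graph_iso_complete_iff assms(2) by blast
    with K p show "p \<in> ?copies"
      by (auto simp: two_subsets_def)
  qed
  moreover have "inj_on (\<lambda>K. (K, two_subsets K)) ?cliques" by (auto intro: inj_onI)
  ultimately show ?thesis unfolding count_copies_def by (simp add: card_image)
qed

lemma count_copies_K3:
  assumes "simple_graph V E"
  shows "count_copies V E K3_V K3_E = card (triangles E)"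
proof -
  have "K3_E = two_subsets K3_V"
    unfolding K3_E_def K3_V_def by (simp add: two_subsets_insert3)
  moreover have "{K. K \<subseteq> V \<and> card K = card K3_V \<and> two_subsets K \<subseteq> E} = triangles E"
    using triangle_subset_vertices[OF assms] by (auto simp: K3_V_def triangles_def)
  ultimately show ?thesis
    using count_copies_complete[OF assms, of K3_V] by (simp add: K3_V_def)
qed

definition neighbors :: "'a set set \<Rightarrow> 'a \<Rightarrow> 'a set" where
  "neighbors E u = {x. {u, x} \<in> E}"

definition star :: "'a \<Rightarrow> 'a set \<Rightarrow> 'a set set" where
  "star v X = (\<lambda>x. {v, x}) ` X"

lemma doubleton_mem_star_iff:
  "{p, q} \<in> star v Z \<longleftrightarrow> p = v \<and> q \<in> Z \<or> q = v \<and> p \<in> Z"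
  by (auto simp: star_def doubleton_eq_iff)

lemma card_star: "card (star v Z) = card Z"
  unfolding star_def by (rule card_image) (auto intro!: inj_onI simp: doubleton_eq_iff)

definition induced_edges :: "'a set set \<Rightarrow> 'a set \<Rightarrow> 'a set set" where
  "induced_edges E U = {e \<in> E. e \<subseteq> U}"

lemma simple_graph_induced_edges:
  "simple_graph V E \<Longrightarrow> U \<subseteq> V \<Longrightarrow> simple_graph U (induced_edges E U)"
  by (auto simp: simple_graph_def induced_edges_def intro: finite_subset)

lemma triangles_induced_edges:
  "triangles (induced_edges E U) \<subseteq> {T \<in> triangles E. T \<subseteq> U}"
  by (auto simp: induced_edges_def insert3_mem_triangles_iff elim!: trianglesE)

lemma card_neighbors_in_clique_le_1:
  assumes clique: "two_subsets S \<subseteq> E" and "q \<notin> S" and no_triangle: "\<forall>T\<in>triangles E. q \<notin> T"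
  shows "card (neighbors E q \<inter> S) \<le> 1"
proof (cases "finite (neighbors E q \<inter> S)")
  case True
  have "x = y" if "x \<in> neighbors E q \<inter> S" "y \<in> neighbors E q \<inter> S" for x y
  proof (rule ccontr)
    assume "x \<noteq> y"
    with that clique \<open>q \<notin> S\<close> have "{q, x, y} \<in> triangles E"
      by (auto simp: insert3_mem_triangles_iff neighbors_def)
    with no_triangle show False by blast
  qed
  with True show ?thesis by (simp add: card_le_Suc0_iff_eq)
qed simp

lemma edges_subset_induced_Un_cross:
  assumes "E \<subseteq> two_subsets V"
  shows "E \<subseteq> induced_edges E (V - S) \<union> two_subsets S \<union> (\<Union>q\<in>V - S. star q (neighbors E q \<inter> S))"
proof
  fix e assume "e \<in> E"
  with assms obtain u v where e: "e = {u, v}" "u \<in> V" "v \<in> V" "u \<noteq> v"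
    by (blast elim: two_subsetsE)
  with \<open>e \<in> E\<close> have "{u, v} \<in> E" "{v, u} \<in> E" by (simp_all add: insert_commute)
  with e show "e \<in> induced_edges E (V - S) \<union> two_subsets S \<union> (\<Union>q\<in>V - S. star q (neighbors E q \<inter> S))"
    by (cases "u \<in> S"; cases "v \<in> S")
      (auto simp: induced_edges_def doubleton_mem_star_iff neighbors_def insert_commute)
qed

lemma card_edges_le_remove_clique:
  assumes sg: "simple_graph V E" and "S \<subseteq> V" and clique: "two_subsets S \<subseteq> E"
    and triangles_in_S: "\<forall>T\<in>triangles E. T \<subseteq> S"
  shows "card E \<le> card (induced_edges E (V - S)) + (card S choose 2) + (card V - card S)"
proof -
  have finV: "finite V" and EV: "E \<subseteq> two_subsets V"
    using sg by (auto simp: simple_graph_iff_two_subsets)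
  have finS: "finite S" using \<open>S \<subseteq> V\<close> finV by (rule finite_subset)
  let ?cross = "\<Union>q\<in>V - S. star q (neighbors E q \<inter> S)"
  have "card ?cross \<le> (\<Sum>q\<in>V - S. card (star q (neighbors E q \<inter> S)))"
    by (rule card_UN_le) (use finV in simp)
  also have "\<dots> \<le> (\<Sum>q\<in>V - S. 1)"
  proof (rule sum_mono)
    fix q assume "q \<in> V - S"
    with triangles_in_S have "\<forall>T\<in>triangles E. q \<notin> T" by blast
    with clique \<open>q \<in> V - S\<close> show "card (star q (neighbors E q \<inter> S)) \<le> 1"
      using card_neighbors_in_clique_le_1[of S E q] by (simp add: card_star)
  qed
  finally have card_cross: "card ?cross \<le> card V - card S"
    using finS \<open>S \<subseteq> V\<close> by (simp add: card_Diff_subset)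
  have "finite (induced_edges E (V - S))" "finite (two_subsets S)" "finite ?cross"
    using simple_graph_finite_edges[OF sg] finV finS
    by (auto simp: induced_edges_def star_def intro: finite_two_subsets)
  then have "card E \<le> card (induced_edges E (V - S) \<union> two_subsets S \<union> ?cross)"
    using edges_subset_induced_Un_cross[OF EV] by (intro card_mono) auto
  also have "\<dots> \<le> card (induced_edges E (V - S)) + card (two_subsets S) + card ?cross"
    by (meson card_Un_le add_right_mono le_trans)
  finally show ?thesis
    using card_cross finS by (simp add: card_two_subsets)
qed

lemma add_2_square_div_4: "((m::nat) + 2)^2 div 4 = m^2 div 4 + m + 1"
proof -
  have "(m + 2)^2 = m^2 + 4 * (m + 1)" by (simp add: power2_eq_square algebra_simps)
  then show ?thesis by simp
qed

theorem mantel: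
  assumes "simple_graph V E" "triangles E = {}"
  shows "card E \<le> card V ^ 2 div 4"
  using assms
proof (induction "card V" arbitrary: V E rule: less_induct)
  case less
  show ?case
  proof (cases "E = {}")
    case False
    then obtain e where "e \<in> E" by blast
    then obtain u w where uw: "{u, w} \<in> E" "u \<in> V" "w \<in> V" "u \<noteq> w"
      using less.prems(1) unfolding simple_graph_iff_two_subsets by (blast elim: two_subsetsE)
    let ?S = "{u, w}"
    have "finite V" using less.prems(1) by (simp add: simple_graph_def)
    with uw have "2 \<le> card V" using card_mono[of V ?S] by simp
    define m where "m = card V - 2"
    with \<open>2 \<le> card V\<close> \<open>finite V\<close> uw have m: "card V = m + 2" "card (V - ?S) = m"
      by (simp_all add: card_Diff_subset)
    have "card (induced_edges E (V - ?S)) \<le> card (V - ?S) ^ 2 div 4"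
    proof (rule less.hyps)
      show "card (V - ?S) < card V" using m by simp
      show "simple_graph (V - ?S) (induced_edges E (V - ?S))"
        using less.prems(1) by (rule simple_graph_induced_edges) blast
      show "triangles (induced_edges E (V - ?S)) = {}"
        using triangles_induced_edges less.prems(2) by blast
    qed
    moreover have "card E \<le> card (induced_edges E (V - ?S)) + 1 + m"
      using card_edges_le_remove_clique[OF less.prems(1), of ?S] uw less.prems(2) m(1)
      by (simp add: two_subsets_doubleton choose_two)
    ultimately show ?thesis
      using m add_2_square_div_4[of m] by simp
  qed simp
qed

lemma card_edges_le_unique_triangle:
  assumes sg: "simple_graph V E" and unique: "triangles E = {T}"
  shows "card E \<le> (card V - 1)^2 div 4 + 2"
proof -
  have T: "T \<in> triangles E" using unique by simp
  then have "T \<subseteq> V" "card T = 3" "two_subsets T \<subseteq> E"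
    using triangle_subset_vertices[OF sg] by (auto simp: triangles_def)
  moreover have "finite V" using sg by (simp add: simple_graph_def)
  ultimately have "3 \<le> card V" "card (V - T) = card V - 3"
    using card_mono[of V T] card_Diff_subset[of T V] finite_subset[of T V] by auto
  define m where "m = card V - 3"
  with \<open>3 \<le> card V\<close> \<open>card (V - T) = card V - 3\<close> have m: "card V = m + 3" "card (V - T) = m"
    by simp_all
  have "triangles (induced_edges E (V - T)) = {}"
    using triangles_induced_edges[of E "V - T"] unique \<open>card T = 3\<close> by fastforce
  then have "card (induced_edges E (V - T)) \<le> m^2 div 4"
    using mantel simple_graph_induced_edges[OF sg, of "V - T"] m(2) by fastforce
  moreover have "card E \<le> card (induced_edges E (V - T)) + 3 + m"
    using card_edges_le_remove_clique[OF sg \<open>T \<subseteq> V\<close> \<open>two_subsets T \<subseteq> E\<close>] unique \<open>card T = 3\<close> m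
    by (simp add: choose_two)
  ultimately show ?thesis
    using m(1) add_2_square_div_4[of m] by simp
qed

lemma distinct_triangles_separating_edge:
  assumes "T1 \<in> triangles E" "T2 \<in> triangles E" "T1 \<noteq> T2"
  obtains f where "f \<in> E" "card f = 2" "f \<subseteq> T1" "\<not> f \<subseteq> T2"
proof -
  have "card T1 = 3" "card T2 = 3" using assms(1,2) by (auto simp: triangles_def)
  moreover have "finite T2" using \<open>card T2 = 3\<close> by (intro card_ge_0_finite) simp
  ultimately have "\<not> T1 \<subseteq> T2" using card_subset_eq[of T2 T1] assms(3) by auto
  then obtain x where "x \<in> T1" "x \<notin> T2" by blast
  with assms(1) obtain p q where "T1 = {x, p, q}" "x \<noteq> p" "{x, p} \<in> E"
    by (metis triangle_through_vertex)
  with \<open>x \<notin> T2\<close> show thesis by (intro that[of "{x, p}"]) auto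
qed

theorem card_edges_le_triangles:
  assumes "simple_graph V E" "triangles E \<noteq> {}"
  shows "card E \<le> (card V - 1)^2 div 4 + card (triangles E) + 1"
  using assms
proof (induction "card E" arbitrary: E rule: less_induct)
  case less
  note sg = less.prems(1)
  show ?case
  proof (cases "card (triangles E) = 1")
    case True
    then obtain T where "triangles E = {T}" by (auto simp: card_1_singleton_iff)
    with True show ?thesis using card_edges_le_unique_triangle[OF sg] by simp
  next
    case False
    have finT: "finite (triangles E)" using sg by (rule finite_triangles)
    have "card (triangles E) \<noteq> 0" using finT less.prems(2) by simp
    with False have "\<not> card (triangles E) \<le> Suc 0" by linarith
    then obtain T1 T2 where T12: "T1 \<in> triangles E" "T2 \<in> triangles E" "T1 \<noteq> T2"
      using card_le_Suc0_iff_eq[OF finT] by blast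
    then obtain f where f: "f \<in> E" "card f = 2" "f \<subseteq> T1" "\<not> f \<subseteq> T2"
      by (rule distinct_triangles_separating_edge)
    have "triangles (E - {f}) \<subset> triangles E" and "T2 \<in> triangles (E - {f})"
      using f T12 by (auto simp: triangles_Diff_edge)
    with finT have fewer_triangles: "card (triangles (E - {f})) < card (triangles E)"
      by (simp add: psubset_card_mono)
    have finE: "finite E" using sg by (rule simple_graph_finite_edges)
    have "card (E - {f}) \<le> (card V - 1)^2 div 4 + card (triangles (E - {f})) + 1"
    proof (rule less.hyps)
      show "card (E - {f}) < card E" using finE f(1) by (rule card_Diff1_less)
      show "simple_graph V (E - {f})" using sg by (auto simp: simple_graph_def)
      show "triangles (E - {f}) \<noteq> {}" using \<open>T2 \<in> triangles (E - {f})\<close> by blast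
    qed
    moreover have "card E = Suc (card (E - {f}))"
      using finE f(1) by (rule card.remove)
    ultimately show ?thesis using fewer_triangles by linarith
  qed
qed

definition complete_bipartite :: "'a set \<Rightarrow> 'a set \<Rightarrow> 'a set set" where
  "complete_bipartite A B = {{x, y} | x y. x \<in> A \<and> y \<in> B}"

lemma doubleton_mem_complete_bipartite_iff:
  "{p, q} \<in> complete_bipartite A B \<longleftrightarrow> p \<in> A \<and> q \<in> B \<or> q \<in> A \<and> p \<in> B"
  by (auto simp: complete_bipartite_def doubleton_eq_iff)

lemma complete_bipartite_eq_image: "complete_bipartite A B = (\<lambda>(x, y). {x, y}) ` (A \<times> B)"
  by (auto simp: complete_bipartite_def)

lemma simple_graph_complete_bipartite_star:
  assumes "finite V" "A \<inter> B = {}" "A \<union> B \<subseteq> V" "v \<in> V" "v \<notin> Z" "Z \<subseteq> V"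
  shows "simple_graph V (complete_bipartite A B \<union> star v Z)"
  using assms by (auto simp: simple_graph_iff_two_subsets complete_bipartite_def star_def)

lemma card_complete_bipartite_star:
  assumes "A \<inter> B = {}" "v \<notin> A \<union> B" "finite A" "finite B" "finite Z"
  shows "card (complete_bipartite A B \<union> star v Z) = card A * card B + card Z"
proof -
  have "inj_on (\<lambda>(x, y). {x, y}) (A \<times> B)"
    using assms(1) by (auto intro!: inj_onI simp: doubleton_eq_iff)
  then have "card (complete_bipartite A B) = card A * card B"
    by (simp add: complete_bipartite_eq_image card_image card_cartesian_product)
  moreover have "complete_bipartite A B \<inter> star v Z = {}"
  proof -
    have "v \<notin> e" if "e \<in> complete_bipartite A B" for e
      using that assms(2) by (auto simp: complete_bipartite_def)
    moreover have "v \<in> e" if "e \<in> star v Z" for e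
      using that by (auto simp: star_def)
    ultimately show ?thesis by blast
  qed
  moreover have "finite (complete_bipartite A B)" "finite (star v Z)"
    using assms(3-5) by (simp_all add: complete_bipartite_eq_image star_def)
  ultimately show ?thesis
    by (simp add: card_Un_disjoint card_star)
qed

lemma triangles_complete_bipartite_star:
  assumes "A \<inter> B = {}" "v \<notin> A \<union> B"
  shows "triangles (complete_bipartite A B \<union> star v Z) = {{v, x, y} | x y. x \<in> Z \<inter> A \<and> y \<in> Z \<inter> B}"
    (is "triangles ?G = ?T")
proof (intro equalityI subsetI)
  fix T assume T: "T \<in> triangles ?G"
  have "v \<in> T"
  proof (rule ccontr)
    assume "v \<notin> T"
    from T obtain a b c where "T = {a, b, c}" "{a, b} \<in> ?G" "{a, c} \<in> ?G" "{b, c} \<in> ?G"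
      by (rule trianglesE)
    with \<open>v \<notin> T\<close> assms(1) show False
      by (auto simp: doubleton_mem_complete_bipartite_iff doubleton_mem_star_iff)
  qed
  with T obtain p q where "T = {v, p, q}" "v \<noteq> p" "v \<noteq> q" "{v, p} \<in> ?G" "{v, q} \<in> ?G" "{p, q} \<in> ?G"
    by (rule triangle_through_vertex)
  with assms show "T \<in> ?T"
    by (auto simp: doubleton_mem_complete_bipartite_iff doubleton_mem_star_iff insert_commute)
next
  fix T assume "T \<in> ?T"
  with assms show "T \<in> triangles ?G"
    by (auto simp: insert3_mem_triangles_iff doubleton_mem_complete_bipartite_iff doubleton_mem_star_iff)
qed

lemma card_triangles_complete_bipartite_star:
  assumes "A \<inter> B = {}" "v \<notin> A \<union> B"
  shows "card (triangles (complete_bipartite A B \<union> star v Z)) = card (Z \<inter> A) * card (Z \<inter> B)"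
proof -
  have "{{v, x, y} | x y. x \<in> Z \<inter> A \<and> y \<in> Z \<inter> B} = (\<lambda>(x, y). {v, x, y}) ` ((Z \<inter> A) \<times> (Z \<inter> B))"
    by auto
  moreover have "(x, y) = (x', y')"
    if xy: "(x, y) \<in> (Z \<inter> A) \<times> (Z \<inter> B)" "(x', y') \<in> (Z \<inter> A) \<times> (Z \<inter> B)"
      and eq: "{v, x, y} = {v, x', y'}" for x y x' y'
  proof -
    have "x \<in> {v, x', y'}" "y \<in> {v, x', y'}" using eq by blast+
    moreover have "x \<noteq> v" "x \<noteq> y'" "y \<noteq> v" "y \<noteq> x'" using xy assms by auto
    ultimately show ?thesis by blast
  qed
  then have "inj_on (\<lambda>(x, y). {v, x, y}) ((Z \<inter> A) \<times> (Z \<inter> B))"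
    by (auto simp: inj_on_def)
  ultimately show ?thesis
    by (simp add: triangles_complete_bipartite_star[OF assms] card_image card_cartesian_product)
qed

lemma mult_halves_eq_square_div_4: "(m::nat) div 2 * (m - m div 2) = m^2 div 4"
proof (cases "even m")
  case True
  then obtain p where "m = 2 * p" by blast
  then show ?thesis by (simp add: power2_eq_square)
next
  case False
  then obtain p where m: "m = 2 * p + 1" by (rule oddE)
  then have "m^2 div 4 = p * p + p" by (simp add: power2_eq_square algebra_simps)
  moreover have "m div 2 = p" "m - m div 2 = p + 1" using m by simp_all
  ultimately show ?thesis by (simp add: algebra_simps)
qed

lemma exists_graph_with_triangles:
  assumes "3 \<le> n" "2 * k + 1 \<le> n"
  obtains E where "simple_graph {..<n} E" "card (triangles E) = k" "card E = (n - 1)^2 div 4 + k + 1"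
proof
  define a where "a = (n - 1) div 2"
  let ?A = "{..<a}" and ?B = "{a..<n - 1}" and ?Z = "insert 0 {a..<a + k}"
  let ?E = "complete_bipartite ?A ?B \<union> star (n - 1) ?Z"
  have "1 \<le> a" "a + k \<le> n - 1" using assms by (auto simp: a_def)
  have disj: "?A \<inter> ?B = {}" "n - 1 \<notin> ?A \<union> ?B" using \<open>a + k \<le> n - 1\<close> by auto
  show "simple_graph {..<n} ?E"
    using \<open>a + k \<le> n - 1\<close> \<open>1 \<le> a\<close> by (intro simple_graph_complete_bipartite_star) auto
  have "?Z \<inter> ?A = {0}" "?Z \<inter> ?B = {a..<a + k}"
    using \<open>1 \<le> a\<close> \<open>a + k \<le> n - 1\<close> by auto
  then show "card (triangles ?E) = k"
    using card_triangles_complete_bipartite_star[OF disj] by simp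
  have "card ?E = a * (n - 1 - a) + (k + 1)"
    using card_complete_bipartite_star[OF disj] \<open>1 \<le> a\<close> by simp
  then show "card ?E = (n - 1)^2 div 4 + k + 1"
    using mult_halves_eq_square_div_4[of "n - 1"] by (simp add: a_def)
qed

lemma exa_candidates_K3_le:
  assumes "1 \<le> k" "c \<in> exa_candidates k n K3_V K3_E"
  shows "c \<le> (n - 1)^2 div 4 + k + 1"
proof -
  obtain E where E: "c = card E" "simple_graph {..<n} E" "count_copies {..<n} E K3_V K3_E = k"
    using assms(2) unfolding exa_candidates_def by blast
  then have "card (triangles E) = k" by (simp add: count_copies_K3)
  with E assms(1) show ?thesis
    using card_edges_le_triangles[of "{..<n}" E] by fastforce
qed

lemma exa_K3:
  assumes "1 \<le> k" "2 * k + 1 \<le> n"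
  shows "exa_candidates k n K3_V K3_E \<noteq> {}" "exa k n K3_V K3_E = (n - 1)^2 div 4 + k + 1"
proof -
  let ?m = "(n - 1)^2 div 4 + k + 1"
  have "3 \<le> n" using assms by linarith
  then obtain E where E: "simple_graph {..<n} E" "card (triangles E) = k" "card E = ?m"
    using assms(2) by (rule exists_graph_with_triangles)
  then have "count_copies {..<n} E K3_V K3_E = k" by (simp add: count_copies_K3)
  with E have attained: "?m \<in> exa_candidates k n K3_V K3_E"
    unfolding exa_candidates_def by (intro CollectI exI[of _ E]) simp
  then show "exa_candidates k n K3_V K3_E \<noteq> {}" by blast
  have upper: "\<forall>c \<in> exa_candidates k n K3_V K3_E. c \<le> ?m"
    using exa_candidates_K3_le assms(1) by blast
  then have "finite (exa_candidates k n K3_V K3_E)"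
    by (meson atMost_iff finite_atMost finite_subset subsetI)
  with attained upper show "exa k n K3_V K3_E = ?m"
    unfolding exa_def by (intro Max_eqI) auto
qed

lemma floor_square_div_4: "1 \<le> n \<Longrightarrow> \<lfloor>(real n - 1)^2 / 4\<rfloor> = int ((n - 1)^2 div 4)"
  using floor_divide_of_nat_eq[of "(n - 1)^2" 4] by (simp add: of_nat_diff)

theorem theorem1p5:
  fixes k :: nat
  assumes "k \<ge> 1"
  shows "\<exists>n0. \<forall>n\<ge>n0. exa_candidates k n K3_V K3_E \<noteq> {} \<and>
           int (exa k n K3_V K3_E) = \<lfloor>(real n - 1)^2 / 4\<rfloor> + int k + 1"
proof (intro exI[of _ "2 * k + 1"] allI impI)
  fix n assume "2 * k + 1 \<le> n"
  with assms show "exa_candidates k n K3_V K3_E \<noteq> {} \<and>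
           int (exa k n K3_V K3_E) = \<lfloor>(real n - 1)^2 / 4\<rfloor> + int k + 1"
    using exa_K3 floor_square_div_4[of n] by simp
qed

end
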